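(* For every $t\ge2$, every sequence $\theta_1,\dots,\theta_{t-1}\in\Theta$, and every $\theta\in\Theta$, the effective number of trajectories satisfies $\eta_t(\theta)\ge T_t(\theta)$. Moreover, if $v(\theta)=\sup_{\theta'\in\Theta}d_2(p_\theta\|p_{\theta'})$ is finite, then $\eta_t(\theta)\ge\frac{t-1}{v(\theta)}$.
   Context: Each $\theta\in\Theta$ defines a policy inducing a trajectory distribution $p_\theta$. For probability measures $P\ll Q$, $d_2(P\|Q)=\int(\frac{dP}{dQ})^2dQ$ ($+\infty$ if $P\not\ll Q$). Given previously executed parameters $\theta_1,\dots,\theta_{t-1}$, $\Phi_t=\frac1{t-1}\sum_{i=1}^{t-1}p_{\theta_i}$, $\eta_t(\theta)=\frac{t-1}{d_2(p_\theta\|\Phi_t)}$ (equal to $0$ if the divergence is infinite), and $T_t(\theta)=\sum_{i=1}^{t-1}\mathbb 1\{\theta_i=\theta\}$. *)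

theory Defs
  imports "HOL-Probability.Probability"
begin

text \<open>Note: in the library, absolutely_continuous Q P means P << Q.\<close>
definition d2 :: "'a measure \<Rightarrow> 'a measure \<Rightarrow> ennreal" where
  "d2 P Q = (if sets P = sets Q \<and> absolutely_continuous Q P
             then (\<integral>\<^sup>+ x. (RN_deriv Q P x)^2 \<partial>Q) else \<infinity>)"

definition mixture :: "'a measure \<Rightarrow> ('p \<Rightarrow> 'a measure) \<Rightarrow> (nat \<Rightarrow> 'p) \<Rightarrow> nat \<Rightarrow> 'a measure" where
  "mixture M p th t = measure_of (space M) (sets M)
     (\<lambda>A. (1 / of_nat (t - 1)) * (\<Sum>i\<in>{1..t-1}. emeasure (p (th i)) A))"

definition eta :: "'a measure \<Rightarrow> ('p \<Rightarrow> 'a measure) \<Rightarrow> (nat \<Rightarrow> 'p) \<Rightarrow> nat \<Rightarrow> 'p \<Rightarrow> ennreal" where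
  "eta M p th t \<theta> = (let D = d2 (p \<theta>) (mixture M p th t) in
      if D = \<infinity> then 0 else of_nat (t - 1) / D)"

definition T_count :: "(nat \<Rightarrow> 'p) \<Rightarrow> nat \<Rightarrow> 'p \<Rightarrow> nat" where
  "T_count th t \<theta> = card {i \<in> {1..t-1}. th i = \<theta>}"

end

(* Write P = p_theta and Phi for the mixture. The divergence has the variational form
   d2(P||Phi) = sup (2 int g dP - int g^2 dPhi) over bounded measurable g >= 0, approached by
   the truncations min(dP/dPhi, k); so d2(P||Phi) <= B as soon as 2 int g dP <= int g^2 dPhi + B
   for all such g.
   If p_theta occurs T > 0 times among the p_theta_i, then Phi >= (T/(t-1)) P, and the AM-GM
   inequality 2g <= c g^2 + 1/c with c = T/(t-1) gives B = (t-1)/T.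
   For the second bound, 2hg <= h^2 + g^2 with h = dP/dp_theta_i gives
   2 int g dP <= d2(P||p_theta_i) + int g^2 dp_theta_i for every i; averaging over i shows that
   d2(P||.) is convex, with B the mean of the d2(P||p_theta_i), which is at most v(theta). *)

theory Submission
  imports Defs
begin

lemma ennreal_inverse_antimono:
  assumes "x \<le> (y::ennreal)" shows "inverse y \<le> inverse x"
proof (cases "x = 0 \<or> y = \<top>")
  case False
  then obtain a b where ab: "x = ennreal a" "y = ennreal b" "0 < a"
    using assms by (cases x; cases y) (auto simp: top_unique)
  with assms have "a \<le> b" by (simp add: ennreal_le_iff2)
  with ab show ?thesis by (simp add: inverse_ennreal ennreal_leI le_imp_inverse_le)
qed auto

lemma ennreal_divide_left_antimono: "x \<le> (y::ennreal) \<Longrightarrow> a / y \<le> a / x"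
  unfolding divide_ennreal_def by (intro mult_left_mono ennreal_inverse_antimono) auto

lemma ennreal_two_mult_le_AM_GM:
  assumes "0 < c" "x < \<top>"
  shows "2 * x \<le> ennreal c * x\<^sup>2 + ennreal (1 / c)"
proof -
  obtain r where r: "x = ennreal r" "0 \<le> r" using assms(2) by (cases x) auto
  have "c * (c * r\<^sup>2 + 1 / c) - c * (2 * r) = (c * r - 1)\<^sup>2"
    using assms(1) by (simp add: power2_eq_square field_simps)
  then have "c * (2 * r) \<le> c * (c * r\<^sup>2 + 1 / c)"
    by (metis diff_ge_0_iff_ge zero_le_power2)
  then have "2 * r \<le> c * r\<^sup>2 + 1 / c"
    using assms(1) by simp
  have "2 * x = ennreal (2 * r)"
    using r by (simp add: ennreal_mult)
  also have "\<dots> \<le> ennreal (c * r\<^sup>2 + 1 / c)"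
    by (rule ennreal_leI) fact
  also have "\<dots> = ennreal c * x\<^sup>2 + ennreal (1 / c)"
    using r assms(1) by (simp add: ennreal_plus[symmetric] ennreal_mult ennreal_power)
  finally show ?thesis .
qed

lemma ennreal_average_const:
  assumes "finite I" "I \<noteq> {}" shows "(1 / of_nat (card I)) * (\<Sum>i\<in>I. x) = (x::ennreal)"
proof -
  have "(1 / of_nat (card I)) * of_nat (card I) = (1::ennreal)"
    using assms by (simp add: ennreal_divide_times of_nat_less_top)
  then show ?thesis by (simp add: mult.assoc[symmetric])
qed

lemma SUP_min_of_nat_power2: "(SUP k::nat. (min a (of_nat k))\<^sup>2) = (a::ennreal)\<^sup>2"
proof (rule antisym)
  show "(SUP k::nat. (min a (of_nat k))\<^sup>2) \<le> a\<^sup>2"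
    by (intro SUP_least power_mono) auto
next
  show "a\<^sup>2 \<le> (SUP k::nat. (min a (of_nat k))\<^sup>2)"
  proof (cases "a = \<top>")
    case True
    have "(of_nat k :: ennreal) \<le> (min a (of_nat k))\<^sup>2" for k
      using True le_square[of k] by (simp add: power2_eq_square flip: of_nat_mult)
    then have "(SUP k::nat. of_nat k :: ennreal) \<le> (SUP k::nat. (min a (of_nat k))\<^sup>2)"
      by (intro SUP_mono) auto
    then show ?thesis
      using True by (simp add: ennreal_SUP_of_nat_eq_top top_unique)
  next
    case False
    then obtain r where "a = ennreal r" by (cases a) auto
    moreover obtain k :: nat where "r \<le> real k" using real_arch_simple by blast
    ultimately have "min a (of_nat k) = a"
      by (simp add: min_def ennreal_of_nat_eq_real_of_nat)
    then show ?thesis by (metis SUP_upper UNIV_I)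
  qed
qed

definition uniform_mixture :: "'a measure \<Rightarrow> 'i set \<Rightarrow> ('i \<Rightarrow> 'a measure) \<Rightarrow> 'a measure" where
  "uniform_mixture M I N = measure_of (space M) (sets M)
     (\<lambda>A. (1 / of_nat (card I)) * (\<Sum>i\<in>I. emeasure (N i) A))"

lemma mixture_eq_uniform_mixture: "mixture M p th t = uniform_mixture M {1..t-1} (\<lambda>i. p (th i))"
  by (simp add: mixture_def uniform_mixture_def)

lemma sets_uniform_mixture [simp, measurable_cong]: "sets (uniform_mixture M I N) = sets M"
  by (simp add: uniform_mixture_def)

lemma space_uniform_mixture [simp]: "space (uniform_mixture M I N) = space M"
  by (simp add: uniform_mixture_def)

lemma emeasure_uniform_mixture:
  assumes "finite I" "\<And>i. i \<in> I \<Longrightarrow> sets (N i) = sets M" "A \<in> sets M"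
  shows "emeasure (uniform_mixture M I N) A = (1 / of_nat (card I)) * (\<Sum>i\<in>I. emeasure (N i) A)"
  unfolding uniform_mixture_def
proof (rule emeasure_measure_of_sigma)
  show "countably_additive (sets M) (\<lambda>A. (1 / of_nat (card I)) * (\<Sum>i\<in>I. emeasure (N i) A))"
  proof (rule countably_additiveI)
    fix A :: "nat \<Rightarrow> _"
    assume A: "range A \<subseteq> sets M" "disjoint_family A"
    have "(\<Sum>j. \<Sum>i\<in>I. emeasure (N i) (A j)) = (\<Sum>i\<in>I. \<Sum>j. emeasure (N i) (A j))"
      by (rule suminf_sum) auto
    also have "\<dots> = (\<Sum>i\<in>I. emeasure (N i) (\<Union>j. A j))"
      using A assms(2) by (intro sum.cong refl suminf_emeasure) auto
    finally show "(\<Sum>j. (1 / of_nat (card I)) * (\<Sum>i\<in>I. emeasure (N i) (A j)))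
        = (1 / of_nat (card I)) * (\<Sum>i\<in>I. emeasure (N i) (\<Union>j. A j))"
      by simp
  qed
qed (auto simp: positive_def sets.sigma_algebra_axioms assms(3))

lemma nn_integral_uniform_mixture:
  assumes I: "finite I" "\<And>i. i \<in> I \<Longrightarrow> sets (N i) = sets M"
    and f: "f \<in> borel_measurable M"
  shows "(\<integral>\<^sup>+x. f x \<partial>uniform_mixture M I N) = (1 / of_nat (card I)) * (\<Sum>i\<in>I. \<integral>\<^sup>+x. f x \<partial>N i)"
  using f
proof (induct rule: borel_measurable_induct)
  case (cong f g)
  have "(\<integral>\<^sup>+x. f x \<partial>N i) = (\<integral>\<^sup>+x. g x \<partial>N i)" if "i \<in> I" for i
    using cong sets_eq_imp_space_eq[OF I(2)[OF that]] by (intro nn_integral_cong) auto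
  moreover have "(\<integral>\<^sup>+x. f x \<partial>uniform_mixture M I N) = (\<integral>\<^sup>+x. g x \<partial>uniform_mixture M I N)"
    using cong by (intro nn_integral_cong) auto
  ultimately show ?case
    using cong by simp
next
  case (set A)
  then show ?case using I by (simp add: emeasure_uniform_mixture)
next
  case (mult u k)
  then have "u \<in> borel_measurable (N i)" if "i \<in> I" for i
    using I(2)[OF that] by (simp cong: measurable_cong_sets)
  with mult show ?case
    by (simp add: nn_integral_cmult sum_distrib_left ac_simps)
next
  case (add u v)
  then have "u \<in> borel_measurable (N i) \<and> v \<in> borel_measurable (N i)" if "i \<in> I" for i
    using I(2)[OF that] by (simp cong: measurable_cong_sets)
  with add show ?case
    by (simp add: nn_integral_add sum.distrib distrib_left)
next
  case (seq U)
  have U: "U j \<in> borel_measurable (N i)" if "i \<in> I" for i j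
    using seq I(2)[OF that] by (simp cong: measurable_cong_sets)
  have mono: "incseq (\<lambda>j. \<integral>\<^sup>+x. U j x \<partial>N i)" for i
    using \<open>incseq U\<close> by (auto simp: incseq_def le_fun_def intro!: nn_integral_mono)
  have "(\<integral>\<^sup>+x. (SUP j. U j) x \<partial>uniform_mixture M I N) = (SUP j. \<integral>\<^sup>+x. U j x \<partial>uniform_mixture M I N)"
    unfolding SUP_apply using seq by (intro nn_integral_monotone_convergence_SUP) auto
  also have "\<dots> = (1 / of_nat (card I)) * (SUP j. \<Sum>i\<in>I. \<integral>\<^sup>+x. U j x \<partial>N i)"
    using seq by (simp add: SUP_mult_left_ennreal)
  also have "(SUP j. \<Sum>i\<in>I. \<integral>\<^sup>+x. U j x \<partial>N i) = (\<Sum>i\<in>I. SUP j. \<integral>\<^sup>+x. U j x \<partial>N i)"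
    using mono by (rule ennreal_SUP_sum)
  also have "\<dots> = (\<Sum>i\<in>I. \<integral>\<^sup>+x. (SUP j. U j) x \<partial>N i)"
    unfolding SUP_apply using seq U
    by (intro sum.cong refl nn_integral_monotone_convergence_SUP[symmetric]) auto
  finally show ?case .
qed

lemma prob_space_uniform_mixture:
  assumes "finite I" "I \<noteq> {}" "\<And>i. i \<in> I \<Longrightarrow> prob_space (N i)" "\<And>i. i \<in> I \<Longrightarrow> sets (N i) = sets M"
  shows "prob_space (uniform_mixture M I N)"
proof (rule prob_spaceI)
  have "emeasure (N i) (space M) = 1" if "i \<in> I" for i
    using prob_space.emeasure_space_1[OF assms(3)[OF that]] sets_eq_imp_space_eq[OF assms(4)[OF that]]
    by simp
  then show "emeasure (uniform_mixture M I N) (space (uniform_mixture M I N)) = 1"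
    using assms ennreal_average_const[OF assms(1,2), of 1] by (simp add: emeasure_uniform_mixture)
qed

lemma absolutely_continuous_uniform_mixture:
  assumes "finite I" "\<And>i. i \<in> I \<Longrightarrow> sets (N i) = sets M" "i \<in> I"
  shows "absolutely_continuous (uniform_mixture M I N) (N i)"
  unfolding absolutely_continuous_def
proof
  fix A assume A: "A \<in> null_sets (uniform_mixture M I N)"
  then have A_sets: "A \<in> sets M" and "emeasure (uniform_mixture M I N) A = 0"
    by auto
  then have "emeasure (N i) A = 0"
    using assms by (simp add: emeasure_uniform_mixture sum_eq_0_iff)
  then show "A \<in> null_sets (N i)"
    using A_sets assms(2)[OF assms(3)] by (simp add: null_sets_def)
qed

lemma scale_measure_le_uniform_mixture:
  assumes I: "finite I" "\<And>i. i \<in> I \<Longrightarrow> sets (N i) = sets M" and P: "sets P = sets M"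
  shows "scale_measure (ennreal (real (card {i \<in> I. N i = P}) / real (card I))) P
    \<le> uniform_mixture M I N"
proof -
  let ?S = "{i \<in> I. N i = P}"
  have "ennreal (real (card ?S) / real (card I)) * emeasure P A \<le> emeasure (uniform_mixture M I N) A"
    if A: "A \<in> sets M" for A
  proof -
    have "ennreal (real (card ?S) / real (card I)) * emeasure P A
        = (1 / of_nat (card I)) * (\<Sum>i\<in>?S. emeasure (N i) A)"
    proof (cases "card I = 0")
      case False
      then show ?thesis
        by (simp add: ennreal_of_nat_eq_real_of_nat divide_ennreal[symmetric] divide_ennreal_def ac_simps)
    qed (use I in simp)
    also have "\<dots> \<le> (1 / of_nat (card I)) * (\<Sum>i\<in>I. emeasure (N i) A)"
      using I by (intro mult_left_mono sum_mono2) auto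
    also have "\<dots> = emeasure (uniform_mixture M I N) A"
      using I A by (simp add: emeasure_uniform_mixture)
    finally show ?thesis .
  qed
  then show ?thesis
    using P by (simp add: le_measure)
qed

lemma d2_le_of_variational_bound:
  assumes Q: "finite_measure Q" and sets: "sets P = sets Q" and ac: "absolutely_continuous Q P"
    and bound: "\<And>g C. g \<in> borel_measurable Q \<Longrightarrow> C < \<infinity> \<Longrightarrow> (\<And>x. g x \<le> C) \<Longrightarrow>
      2 * (\<integral>\<^sup>+x. g x \<partial>P) \<le> (\<integral>\<^sup>+x. (g x)\<^sup>2 \<partial>Q) + B"
  shows "d2 P Q \<le> B"
proof -
  interpret Q: finite_measure Q by (rule Q)
  define f where "f = RN_deriv Q P"
  define g where "g k x = min (f x) (of_nat k)" for k :: nat and x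
  have g_meas: "g k \<in> borel_measurable Q" for k
    unfolding g_def f_def by measurable
  have truncated_le: "(\<integral>\<^sup>+x. (g k x)\<^sup>2 \<partial>Q) \<le> B" for k
  proof -
    define a where "a = (\<integral>\<^sup>+x. (g k x)\<^sup>2 \<partial>Q)"
    have "a \<le> (\<integral>\<^sup>+x. (of_nat k)\<^sup>2 \<partial>Q)"
      unfolding a_def g_def by (intro nn_integral_mono power_mono) auto
    also have "\<dots> < \<infinity>"
      using Q.emeasure_finite[of "space Q"]
      by (simp add: ennreal_mult_eq_top_iff flip: of_nat_power less_top)
    finally have a_finite: "a < \<infinity>" .
    have "a \<le> (\<integral>\<^sup>+x. f x * g k x \<partial>Q)"
      unfolding a_def g_def by (intro nn_integral_mono) (auto simp: power2_eq_square intro: mult_right_mono)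
    also have "\<dots> = (\<integral>\<^sup>+x. g k x \<partial>P)"
      using ac sets g_meas by (simp add: Q.RN_deriv_nn_integral f_def)
    finally have "a + a \<le> 2 * (\<integral>\<^sup>+x. g k x \<partial>P)"
      by (simp add: mult_2 add_mono)
    also have "\<dots> \<le> a + B"
      unfolding a_def by (rule bound[OF g_meas, of "of_nat k"]) (auto simp: g_def of_nat_less_top)
    finally show ?thesis
      using a_finite by (auto simp: a_def ennreal_add_left_cancel_le)
  qed
  have "d2 P Q = (\<integral>\<^sup>+x. (f x)\<^sup>2 \<partial>Q)"
    using sets ac by (simp add: d2_def f_def)
  also have "\<dots> = (\<integral>\<^sup>+x. (SUP k. (g k x)\<^sup>2) \<partial>Q)"
    by (simp add: g_def SUP_min_of_nat_power2)
  also have "\<dots> = (SUP k. \<integral>\<^sup>+x. (g k x)\<^sup>2 \<partial>Q)"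
  proof (rule nn_integral_monotone_convergence_SUP[unfolded SUP_apply])
    show "incseq (\<lambda>k x. (g k x)\<^sup>2)"
      by (auto simp: incseq_def le_fun_def g_def intro!: power_mono min.mono)
  qed (use g_meas in simp)
  also have "\<dots> \<le> B"
    by (intro SUP_least truncated_le)
  finally show ?thesis .
qed

lemma two_nn_integral_le_d2_add:
  assumes Q: "sigma_finite_measure Q" and g: "g \<in> borel_measurable Q"
  shows "2 * (\<integral>\<^sup>+x. g x \<partial>P) \<le> d2 P Q + (\<integral>\<^sup>+x. (g x)\<^sup>2 \<partial>Q)"
proof (cases "sets P = sets Q \<and> absolutely_continuous Q P")
  case True
  interpret Q: sigma_finite_measure Q by (rule Q)
  define h where "h = RN_deriv Q P"
  have "2 * (\<integral>\<^sup>+x. g x \<partial>P) = (\<integral>\<^sup>+x. 2 * h x * g x \<partial>Q)"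
    using True g by (simp add: Q.RN_deriv_nn_integral h_def nn_integral_cmult mult.assoc)
  also have "\<dots> \<le> (\<integral>\<^sup>+x. (h x)\<^sup>2 + (g x)\<^sup>2 \<partial>Q)"
    by (intro nn_integral_mono sum_of_squares_ge_ennreal)
  also have "\<dots> = d2 P Q + (\<integral>\<^sup>+x. (g x)\<^sup>2 \<partial>Q)"
    using True g by (simp add: nn_integral_add d2_def h_def)
  finally show ?thesis .
qed (auto simp: d2_def)

lemma d2_le_inverse_if_scale_measure_le:
  assumes P: "prob_space P" and Q: "finite_measure Q" and sets: "sets P = sets Q"
    and c: "0 < c" and le: "scale_measure (ennreal c) P \<le> Q"
  shows "d2 P Q \<le> ennreal (1 / c)"
proof (rule d2_le_of_variational_bound[OF Q sets])
  interpret P: prob_space P by (rule P)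
  show "absolutely_continuous Q P"
    unfolding absolutely_continuous_def
  proof
    fix A assume A: "A \<in> null_sets Q"
    then have "ennreal c * emeasure P A \<le> emeasure Q A"
      using le_measureD3[OF le] sets by (metis emeasure_scale_measure sets_scale_measure)
    with A have "ennreal c * emeasure P A = 0"
      by auto
    with c have "emeasure P A = 0"
      by simp
    with A sets show "A \<in> null_sets P"
      by (simp add: null_sets_def)
  qed
  fix g :: "_ \<Rightarrow> ennreal" and C assume g: "g \<in> borel_measurable Q" "C < \<infinity>" "\<And>x. g x \<le> C"
  then have gP: "g \<in> borel_measurable P"
    using sets by (simp cong: measurable_cong_sets)
  have "2 * (\<integral>\<^sup>+x. g x \<partial>P) = (\<integral>\<^sup>+x. 2 * g x \<partial>P)"
    using gP by (simp add: nn_integral_cmult)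
  also have "\<dots> \<le> (\<integral>\<^sup>+x. ennreal c * (g x)\<^sup>2 + ennreal (1 / c) \<partial>P)"
    using g c by (intro nn_integral_mono ennreal_two_mult_le_AM_GM) (auto intro: le_less_trans)
  also have "\<dots> = (\<integral>\<^sup>+x. (g x)\<^sup>2 \<partial>scale_measure (ennreal c) P) + ennreal (1 / c)"
    using gP by (simp add: nn_integral_add nn_integral_cmult nn_integral_scale_measure P.emeasure_space_1)
  also have "(\<integral>\<^sup>+x. (g x)\<^sup>2 \<partial>scale_measure (ennreal c) P) \<le> (\<integral>\<^sup>+x. (g x)\<^sup>2 \<partial>Q)"
    using sets le by (intro nn_integral_mono_measure) auto
  finally show "2 * (\<integral>\<^sup>+x. g x \<partial>P) \<le> (\<integral>\<^sup>+x. (g x)\<^sup>2 \<partial>Q) + ennreal (1 / c)"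
    by (simp add: add_right_mono)
qed

lemma d2_uniform_mixture_le_divide_card:
  assumes I: "finite I"
    and N: "\<And>i. i \<in> I \<Longrightarrow> prob_space (N i)" "\<And>i. i \<in> I \<Longrightarrow> sets (N i) = sets M"
    and P: "prob_space P" "sets P = sets M" and S: "{i \<in> I. N i = P} \<noteq> {}"
  shows "d2 P (uniform_mixture M I N) \<le> ennreal (real (card I) / real (card {i \<in> I. N i = P}))"
proof -
  have "I \<noteq> {}" "0 < card I" "0 < card {i \<in> I. N i = P}"
    using I S by (auto simp: card_gt_0_iff)
  then have "d2 P (uniform_mixture M I N)
      \<le> ennreal (1 / (real (card {i \<in> I. N i = P}) / real (card I)))"
    using I N P
    by (intro d2_le_inverse_if_scale_measure_le prob_space.finite_measure prob_space_uniform_mixture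
        scale_measure_le_uniform_mixture) auto
  then show ?thesis
    by simp
qed

lemma d2_uniform_mixture_le_average:
  assumes I: "finite I" "I \<noteq> {}"
    and N: "\<And>i. i \<in> I \<Longrightarrow> prob_space (N i)" "\<And>i. i \<in> I \<Longrightarrow> sets (N i) = sets M"
    and P: "sets P = sets M"
  shows "d2 P (uniform_mixture M I N) \<le> (1 / of_nat (card I)) * (\<Sum>i\<in>I. d2 P (N i))"
    (is "_ \<le> ?avg")
proof (cases "?avg < \<infinity>")
  case True
  obtain i where i: "i \<in> I" using I by auto
  with True I have "d2 P (N i) < \<infinity>"
    by (auto simp: ennreal_mult_less_top sum_eq_0_iff)
  then have "absolutely_continuous (N i) P"
    by (auto simp: d2_def split: if_splits)
  moreover have "absolutely_continuous (uniform_mixture M I N) (N i)"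
    using I(1) N(2) i by (rule absolutely_continuous_uniform_mixture)
  ultimately have ac: "absolutely_continuous (uniform_mixture M I N) P"
    by (auto simp: absolutely_continuous_def)
  have prob: "prob_space (uniform_mixture M I N)"
    using I N by (rule prob_space_uniform_mixture)
  show ?thesis
  proof (rule d2_le_of_variational_bound[OF prob_space.finite_measure[OF prob] _ ac])
    fix g :: "_ \<Rightarrow> ennreal" assume "g \<in> borel_measurable (uniform_mixture M I N)"
    then have g: "g \<in> borel_measurable M" by simp
    have "2 * (\<integral>\<^sup>+x. g x \<partial>P) = (1 / of_nat (card I)) * (\<Sum>i\<in>I. 2 * (\<integral>\<^sup>+x. g x \<partial>P))"
      using I by (rule ennreal_average_const[symmetric])
    also have "\<dots> \<le> (1 / of_nat (card I)) * (\<Sum>i\<in>I. d2 P (N i) + (\<integral>\<^sup>+x. (g x)\<^sup>2 \<partial>N i))"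
      using N g
      by (intro mult_left_mono sum_mono two_nn_integral_le_d2_add)
         (auto simp: prob_space_imp_sigma_finite cong: measurable_cong_sets)
    also have "\<dots> = (\<integral>\<^sup>+x. (g x)\<^sup>2 \<partial>uniform_mixture M I N) + ?avg"
      using I N g by (simp add: sum.distrib distrib_left nn_integral_uniform_mixture add.commute)
    finally show "2 * (\<integral>\<^sup>+x. g x \<partial>P) \<le> (\<integral>\<^sup>+x. (g x)\<^sup>2 \<partial>uniform_mixture M I N) + ?avg" .
  qed (simp add: P)
qed (simp add: not_less top_unique)

lemma eta_ge_divide_if_d2_le:
  assumes "d2 (p \<theta>) (mixture M p th t) \<le> B" "B < \<infinity>"
  shows "of_nat (t - 1) / B \<le> eta M p th t \<theta>"
proof -
  have "d2 (p \<theta>) (mixture M p th t) \<noteq> \<infinity>"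
    using assms by (auto simp: top_unique)
  with assms(1) show ?thesis
    by (simp add: eta_def ennreal_divide_left_antimono)
qed

lemma eta_ge_card_same_distribution:
  assumes t: "2 \<le> t"
    and comp: "\<And>i. i \<in> {1..t-1} \<Longrightarrow> prob_space (p (th i))"
      "\<And>i. i \<in> {1..t-1} \<Longrightarrow> sets (p (th i)) = sets M"
    and P: "prob_space (p \<theta>)" "sets (p \<theta>) = sets M"
  shows "of_nat (card {i \<in> {1..t-1}. p (th i) = p \<theta>}) \<le> eta M p th t \<theta>"
proof (cases "card {i \<in> {1..t-1}. p (th i) = p \<theta>} = 0")
  case False
  let ?T = "card {i \<in> {1..t-1}. p (th i) = p \<theta>}"
  have "0 < ?T"
    using False by blast
  then have "{i \<in> {1..t-1}. p (th i) = p \<theta>} \<noteq> {}"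
    by (auto simp only: card_gt_0_iff)
  then have "d2 (p \<theta>) (uniform_mixture M {1..t-1} (\<lambda>i. p (th i)))
      \<le> ennreal (real (card {1..t-1}) / real ?T)"
    using comp P by (intro d2_uniform_mixture_le_divide_card) auto
  then have "d2 (p \<theta>) (mixture M p th t) \<le> ennreal (real (t - 1) / real ?T)"
    by (simp add: mixture_eq_uniform_mixture)
  then have "of_nat (t - 1) / ennreal (real (t - 1) / real ?T) \<le> eta M p th t \<theta>"
    by (rule eta_ge_divide_if_d2_le) simp
  also have "of_nat (t - 1) / ennreal (real (t - 1) / real ?T) = of_nat ?T"
    using t \<open>0 < ?T\<close> by (simp add: ennreal_of_nat_eq_real_of_nat divide_ennreal)
  finally show ?thesis .
next
  case True
  then show ?thesis
    by (simp only: of_nat_0 zero_le)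
qed

lemma eta_ge_divide_if_d2_components_le:
  assumes t: "2 \<le> t"
    and comp: "\<And>i. i \<in> {1..t-1} \<Longrightarrow> prob_space (p (th i))"
      "\<And>i. i \<in> {1..t-1} \<Longrightarrow> sets (p (th i)) = sets M"
    and P: "sets (p \<theta>) = sets M"
    and V: "\<And>i. i \<in> {1..t-1} \<Longrightarrow> d2 (p \<theta>) (p (th i)) \<le> V" "V < \<infinity>"
  shows "of_nat (t - 1) / V \<le> eta M p th t \<theta>"
proof -
  let ?I = "{1..t-1}"
  have "d2 (p \<theta>) (mixture M p th t) \<le> (1 / of_nat (card ?I)) * (\<Sum>i\<in>?I. d2 (p \<theta>) (p (th i)))"
    unfolding mixture_eq_uniform_mixture using t comp P by (intro d2_uniform_mixture_le_average) auto
  also have "\<dots> \<le> (1 / of_nat (card ?I)) * (\<Sum>i\<in>?I. V)"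
    by (intro mult_left_mono sum_mono V) auto
  also have "\<dots> = V"
    using t by (intro ennreal_average_const) auto
  finally show ?thesis
    using V(2) by (rule eta_ge_divide_if_d2_le)
qed

theorem lemma4:
  fixes M :: "'a measure" and p :: "'p \<Rightarrow> 'a measure" and \<Theta> :: "'p set"
    and th :: "nat \<Rightarrow> 'p" and t :: nat and \<theta> :: 'p
  assumes prob: "\<And>\<theta>'. \<theta>' \<in> \<Theta> \<Longrightarrow> prob_space (p \<theta>')"
    and sets_p: "\<And>\<theta>'. \<theta>' \<in> \<Theta> \<Longrightarrow> sets (p \<theta>') = sets M"
    and t2: "t \<ge> 2"
    and th_in: "\<And>i. i \<in> {1..t-1} \<Longrightarrow> th i \<in> \<Theta>"
    and \<theta>_in: "\<theta> \<in> \<Theta>"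
  shows "eta M p th t \<theta> \<ge> of_nat (T_count th t \<theta>) \<and>
         ((SUP \<theta>'\<in>\<Theta>. d2 (p \<theta>) (p \<theta>')) < \<infinity> \<longrightarrow>
         eta M p th t \<theta> \<ge> of_nat (t - 1) / (SUP \<theta>'\<in>\<Theta>. d2 (p \<theta>) (p \<theta>')))"
proof -
  have comp: "prob_space (p (th i))" "sets (p (th i)) = sets M" if "i \<in> {1..t-1}" for i
    using prob sets_p th_in[OF that] by auto
  have P: "prob_space (p \<theta>)" "sets (p \<theta>) = sets M"
    using prob sets_p \<theta>_in by auto
  have "of_nat (T_count th t \<theta>) \<le> (of_nat (card {i \<in> {1..t-1}. p (th i) = p \<theta>}) :: ennreal)"
    unfolding T_count_def by (intro of_nat_mono card_mono) auto
  also have "\<dots> \<le> eta M p th t \<theta>"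
    using t2 comp P by (rule eta_ge_card_same_distribution)
  finally have "of_nat (T_count th t \<theta>) \<le> eta M p th t \<theta>" .
  moreover have "of_nat (t - 1) / (SUP \<theta>'\<in>\<Theta>. d2 (p \<theta>) (p \<theta>')) \<le> eta M p th t \<theta>"
    if "(SUP \<theta>'\<in>\<Theta>. d2 (p \<theta>) (p \<theta>')) < \<infinity>"
    using t2 comp P(2) th_in that by (intro eta_ge_divide_if_d2_components_le) (auto intro: SUP_upper)
  ultimately show ?thesis
    by blast
qed

end
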